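(* Let $e,c,h\in\omega^\omega$ with $e$ nondecreasing and unbounded and $c(n)\ge1$ for all $n$. Let $\langle I_n:n\in\omega\rangle$ be the partition of $\omega$ into consecutive intervals with $|I_n|=h(n)$, and define $g_{c,h}\in\omega^\omega$ by $g_{c,h}(k)=\lfloor\log_2c(n)\rfloor$ whenever $k\in I_n$. Suppose $e(g_{c,h}(n))\ge2\log_2n$ for all $n\ge1$. Then $\mathfrak{v}^\exists_{c,h}\le\operatorname{non}(\mathcal{N}^{e^*})$ and $\operatorname{cov}(\mathcal{N}^{e^*})\le\mathfrak{c}^\exists_{c,h}$.
   Context: $2^\omega$ carries the metric $d(x,y)=2^{-\min\{n:x(n)\neq y(n)\}}$ for $x\neq y$ and $d(x,x)=0$. A gauge function is a nondecreasing $f\colon[0,\infty)\to[0,\infty)$ with $f(0)=0$, $\lim_{x\to0}f(x)=0$; $\mathcal{H}^f(A)=\lim_{\delta\to0}\inf\{\sum_nf(\operatorname{diam}C_n):A\subseteq\bigcup_nC_n,\ \operatorname{diam}C_n\le\delta\}$ and $\mathcal{N}^f=\{A\subseteq2^\omega:\mathcal{H}^f(A)=0\}$. For nondecreasing unbounded $e\in\omega^\omega$, $e^*$ is the gauge function with $e^*(0)=0$, $e^*(2^{-k})=2^{-e(k)}$ for all $k\in\omega$, linear on each interval $[2^{-k-1},2^{-k}]$ (and constant on $[1,\infty)$). For $c,h\in\omega^\omega$: $\prod c=\prod_n c(n)$ (each $c(n)=\{0,\dots,c(n)-1\}$), $S(c,h)=\prod_n[c(n)]^{\le h(n)}$ (sequences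 $\phi$ with $\phi(n)\subseteq c(n)$, $|\phi(n)|\le h(n)$), and $x\in^\infty\phi$ iff $x(n)\in\phi(n)$ for infinitely many $n$. $\mathfrak{c}^\exists_{c,h}$ is the least size of $\Phi\subseteq S(c,h)$ such that every $x\in\prod c$ satisfies $x\in^\infty\phi$ for some $\phi\in\Phi$; $\mathfrak{v}^\exists_{c,h}$ is the least size of $F\subseteq\prod c$ such that for every $\phi\in S(c,h)$ some $x\in F$ fails $x\in^\infty\phi$. $\operatorname{cov}(I)$ is the least size of a subfamily of $I$ covering $2^\omega$, $\operatorname{non}(I)$ the least size of a subset of $2^\omega$ not in $I$. *)

theory Defs
  imports "HOL-Analysis.Analysis"
begin

type_synonym cantor = "nat \<Rightarrow> bool"

definition cdist :: "cantor \<Rightarrow> cantor \<Rightarrow> real" where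
  "cdist x y = (if x = y then 0 else (1/2) ^ (LEAST n. x n \<noteq> y n))"

definition cdiam :: "cantor set \<Rightarrow> real" where
  "cdiam C = (if C = {} then 0 else Sup {cdist x y | x y. x \<in> C \<and> y \<in> C})"

definition hausdorff_delta :: "(real \<Rightarrow> real) \<Rightarrow> real \<Rightarrow> cantor set \<Rightarrow> ennreal" where
  "hausdorff_delta f \<delta> A = (INF C \<in> {C :: nat \<Rightarrow> cantor set.
        A \<subseteq> (\<Union>n. C n) \<and> (\<forall>n. cdiam (C n) \<le> \<delta>)}. (\<Sum>n. ennreal (f (cdiam (C n)))))"

text \<open>Since the delta-approximation increases as delta decreases to 0, the limit is the supremum.\<close>
definition hausdorff :: "(real \<Rightarrow> real) \<Rightarrow> cantor set \<Rightarrow> ennreal" where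
  "hausdorff f A = (SUP \<delta> \<in> {0<..}. hausdorff_delta f \<delta> A)"

definition hnull :: "(real \<Rightarrow> real) \<Rightarrow> cantor set set" where
  "hnull f = {A. hausdorff f A = 0}"

text \<open>e*(0)=0, e*(2^-k) = 2^-e(k), linear on [2^-(k+1), 2^-k], constant on [1,inf).
  For 0 < x < 1, k = floor(-log2 x) satisfies 2^-(k+1) < x <= 2^-k.\<close>
definition estar :: "(nat \<Rightarrow> nat) \<Rightarrow> real \<Rightarrow> real" where
  "estar e x = (if x \<le> 0 then 0
     else if 1 \<le> x then (1/2) ^ e 0
     else (let k = nat \<lfloor>- log 2 x\<rfloor>;
               a = (1/2) ^ (k+1); b = (1/2) ^ k
           in (1/2) ^ e (k+1) + (x - a) * ((1/2) ^ e k - (1/2) ^ e (k+1)) / (b - a)))"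

definition prodc :: "(nat \<Rightarrow> nat) \<Rightarrow> (nat \<Rightarrow> nat) set" where
  "prodc c = {x. \<forall>n. x n < c n}"

definition slalom_space :: "(nat \<Rightarrow> nat) \<Rightarrow> (nat \<Rightarrow> nat) \<Rightarrow> (nat \<Rightarrow> nat set) set" where
  "slalom_space c h = {\<phi>. \<forall>n. \<phi> n \<subseteq> {..<c n} \<and> card (\<phi> n) \<le> h n}"

definition inf_in :: "(nat \<Rightarrow> nat) \<Rightarrow> (nat \<Rightarrow> nat set) \<Rightarrow> bool" where
  "inf_in x \<phi> \<longleftrightarrow> infinite {n. x n \<in> \<phi> n}"

definition c_exists_family :: "(nat \<Rightarrow> nat) \<Rightarrow> (nat \<Rightarrow> nat) \<Rightarrow> (nat \<Rightarrow> nat set) set \<Rightarrow> bool" where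
  "c_exists_family c h \<Phi> \<longleftrightarrow> \<Phi> \<subseteq> slalom_space c h \<and> (\<forall>x\<in>prodc c. \<exists>\<phi>\<in>\<Phi>. inf_in x \<phi>)"

definition v_exists_family :: "(nat \<Rightarrow> nat) \<Rightarrow> (nat \<Rightarrow> nat) \<Rightarrow> (nat \<Rightarrow> nat) set \<Rightarrow> bool" where
  "v_exists_family c h F \<longleftrightarrow> F \<subseteq> prodc c \<and> (\<forall>\<phi>\<in>slalom_space c h. \<exists>x\<in>F. \<not> inf_in x \<phi>)"

definition cov_family :: "cantor set set \<Rightarrow> cantor set set \<Rightarrow> bool" where
  "cov_family I \<A> \<longleftrightarrow> \<A> \<subseteq> I \<and> \<Union>\<A> = UNIV"

definition non_set :: "cantor set set \<Rightarrow> cantor set \<Rightarrow> bool" where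
  "non_set I X \<longleftrightarrow> X \<notin> I"

definition card_leq :: "'a set \<Rightarrow> 'b set \<Rightarrow> bool" where
  "card_leq A B \<longleftrightarrow> (\<exists>f. inj_on f A \<and> f ` A \<subseteq> B)"

text \<open>I_n = [sum_{i<n} h i, sum_{i<=n} h i); g(k) = floor(log2 c(n)) for k in I_n.\<close>
definition interval_index :: "(nat \<Rightarrow> nat) \<Rightarrow> nat \<Rightarrow> nat" where
  "interval_index h k = (LEAST n. k < (\<Sum>i\<le>n. h i))"

definition gch :: "(nat \<Rightarrow> nat) \<Rightarrow> (nat \<Rightarrow> nat) \<Rightarrow> nat \<Rightarrow> nat" where
  "gch c h k = nat \<lfloor>log 2 (real (c (interval_index h k)))\<rfloor>"

end

theory Submission
  imports Defs
begin

text \<open>Let \<open>F: 2\<^sup>\<omega> \<rightarrow> \<Prod>c\<close> read the first \<open>\<lfloor>log\<^sub>2 c(n)\<rfloor>\<close> bits of \<open>z\<close> as a number.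
  If \<open>F z \<in>\<^sup>\<infinity> \<phi>\<close> for a slalom \<open>\<phi>\<close>, then \<open>z\<close> lies in infinitely many of the cylinders
  coded by elements of the sets \<open>\<phi>(n)\<close>. Enumerating these cylinders along the intervals \<open>I\<^sub>n\<close>,
  the \<open>k\<close>-th one has diameter \<open>2\<^sup>-\<^sup>g\<^sup>(\<^sup>k\<^sup>)\<close> for \<open>g = g\<^sub>c\<^sub>,\<^sub>h\<close>, hence \<open>e\<^sup>*\<close>-weight
  \<open>2\<^sup>-\<^sup>e\<^sup>(\<^sup>g\<^sup>(\<^sup>k\<^sup>)\<^sup>) \<le> 1/k\<^sup>2\<close> by the growth hypothesis. Tails of this summable cover show that
  \<open>{z. F z \<in>\<^sup>\<infinity> \<phi>}\<close> is \<open>e\<^sup>*\<close>-null, so \<open>F\<close> and \<open>\<phi> \<mapsto> {z. F z \<in>\<^sup>\<infinity> \<phi>}\<close> form a Tukey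
  connection, which gives both inequalities.\<close>

definition cylinder :: "cantor \<Rightarrow> nat \<Rightarrow> cantor set" where
  "cylinder x L = {y. \<forall>i<L. y i = x i}"

lemma cdist_le_if_agree: "\<forall>i<m. x i = y i \<Longrightarrow> cdist x y \<le> (1/2)^m"
proof (cases "x = y")
  case False
  assume agree: "\<forall>i<m. x i = y i"
  obtain n where "x n \<noteq> y n" using False by auto
  then have "x (LEAST n. x n \<noteq> y n) \<noteq> y (LEAST n. x n \<noteq> y n)" by (rule LeastI)
  then have "m \<le> (LEAST n. x n \<noteq> y n)" using agree not_less by blast
  then show ?thesis using False by (simp add: cdist_def power_decreasing)
qed (simp add: cdist_def)

lemma cdist_flip: "cdist x (x(m := \<not> x m)) = (1/2)^m"
proof -
  have "(LEAST n. x n \<noteq> (x(m := \<not> x m)) n) = m"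
    by (rule Least_equality) (auto split: if_splits)
  moreover have "x \<noteq> x(m := \<not> x m)" by (metis fun_upd_same)
  ultimately show ?thesis by (simp add: cdist_def)
qed

lemma cdiam_cylinder: "cdiam (cylinder x L) = (1/2)^L"
proof -
  let ?D = "{cdist y z | y z. y \<in> cylinder x L \<and> z \<in> cylinder x L}"
  have "Sup ?D = (1/2)^L"
  proof (rule cSup_eq_maximum)
    have "x(L := \<not> x L) \<in> cylinder x L" "x \<in> cylinder x L" by (auto simp: cylinder_def)
    then show "(1/2)^L \<in> ?D" using cdist_flip[of x L] by force
  next
    fix d assume "d \<in> ?D"
    then show "d \<le> (1/2)^L" by (auto simp: cylinder_def intro!: cdist_le_if_agree)
  qed
  moreover have "cylinder x L \<noteq> {}" by (auto simp: cylinder_def)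
  ultimately show ?thesis by (simp add: cdiam_def)
qed

lemma estar_half_power: "estar e ((1/2)^m) = (1/2)^(e m)"
proof (cases m)
  case (Suc m')
  have lt: "(1/2::real)^m < 1" using Suc power_strict_decreasing[of 0 m "1/2::real"] by simp
  have "nat \<lfloor>- log 2 ((1/2::real)^m)\<rfloor> = m" by (simp add: log_nat_power log_divide)
  moreover have "(1/2::real)^m - (1/2)^(m+1) \<noteq> 0" "\<not> (1/2::real)^m \<le> 0" by (simp_all add: not_le)
  ultimately show ?thesis using lt by (simp add: estar_def Let_def)
qed (simp add: estar_def)

text \<open>The Hausdorff-measure analogue of the Borel--Cantelli lemma.\<close>

lemma hnull_if_infinitely_often_covered:
  fixes f :: "real \<Rightarrow> real" and C :: "nat \<Rightarrow> cantor set"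
  assumes often: "\<forall>z\<in>A. infinite {k. z \<in> C k}"
    and diam: "(\<lambda>k. cdiam (C k)) \<longlonglongrightarrow> 0"
    and nonneg: "\<forall>k. 0 \<le> f (cdiam (C k))"
    and summable: "summable (\<lambda>k. f (cdiam (C k)))"
  shows "A \<in> hnull f"
proof -
  have small: "hausdorff_delta f \<delta> A \<le> ennreal \<epsilon>" if "0 < \<delta>" "0 < \<epsilon>" for \<delta> \<epsilon> :: real
  proof -
    obtain K1 where tail: "\<forall>n\<ge>K1. norm (\<Sum>i. f (cdiam (C (i + n)))) < \<epsilon>"
      using suminf_exist_split[OF \<open>0 < \<epsilon>\<close> summable] by blast
    obtain K2 where fine: "\<forall>k\<ge>K2. cdiam (C k) < \<delta>"
      using order_tendstoD(2)[OF diam \<open>0 < \<delta>\<close>] by (auto simp: eventually_sequentially)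
    define K where "K = max K1 K2"
    have "A \<subseteq> (\<Union>i. C (i + K))"
    proof
      fix z assume "z \<in> A"
      then obtain k where "K \<le> k" "z \<in> C k"
        using often unfolding infinite_nat_iff_unbounded_le by blast
      then have "z \<in> C ((k - K) + K)" by simp
      then show "z \<in> (\<Union>i. C (i + K))" by blast
    qed
    moreover have "cdiam (C (i + K)) \<le> \<delta>" for i
    proof -
      have "K2 \<le> i + K" unfolding K_def by (metis le_add2 max.cobounded2 order.trans)
      then show ?thesis using fine less_imp_le by blast
    qed
    ultimately have "hausdorff_delta f \<delta> A \<le> (\<Sum>i. ennreal (f (cdiam (C (i + K)))))"
      unfolding hausdorff_delta_def by (intro INF_lower) auto
    also have "\<dots> = ennreal (\<Sum>i. f (cdiam (C (i + K))))"
      using nonneg summable_ignore_initial_segment[OF summable] by (intro suminf_ennreal2) auto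
    also have "\<dots> \<le> ennreal \<epsilon>" using tail[rule_format, of K] by (intro ennreal_leI) (simp add: K_def)
    finally show ?thesis .
  qed
  have "hausdorff_delta f \<delta> A = 0" if "0 < \<delta>" for \<delta>
  proof (rule antisym[OF ennreal_le_epsilon])
    fix \<epsilon> :: real assume "0 < \<epsilon>"
    then show "hausdorff_delta f \<delta> A \<le> 0 + ennreal \<epsilon>"
      using small[OF that] by (simp only: add_0_left)
  qed simp
  then show ?thesis by (simp add: hnull_def hausdorff_def)
qed

definition prefix_code :: "nat \<Rightarrow> cantor \<Rightarrow> nat" where
  "prefix_code L z = (\<Sum>i<L. if z i then 2^i else 0)"

lemma prefix_code_0 [simp]: "prefix_code 0 z = 0"
  and prefix_code_Suc [simp]: "prefix_code (Suc L) z = prefix_code L z + (if z L then 2^L else 0)"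
  by (simp_all add: prefix_code_def)

lemma prefix_code_less: "prefix_code L z < 2^L"
  by (induction L) auto

lemma prefix_code_eq_imp_agree: "prefix_code L y = prefix_code L z \<Longrightarrow> i < L \<Longrightarrow> y i = z i"
proof (induction L)
  case (Suc L)
  have "y L = z L" using Suc.prems(1) prefix_code_less[of L y] prefix_code_less[of L z]
    by (auto split: if_splits)
  with Suc show ?case by (cases "i = L") auto
qed simp

lemma prefix_code_fiber:
  assumes "prefix_code L x = j"
  shows "{y. prefix_code L y = j} = cylinder x L"
proof -
  have "prefix_code L y = prefix_code L x \<longleftrightarrow> (\<forall>i<L. y i = x i)" for y
    using prefix_code_eq_imp_agree[of L y x] by (auto simp: prefix_code_def intro!: sum.cong)
  then show ?thesis using assms by (auto simp: cylinder_def)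
qed

lemma cdiam_prefix_code_fiber:
  "{y. prefix_code L y = j} = {} \<or> cdiam {y. prefix_code L y = j} = (1/2)^L"
proof (cases "\<exists>x. prefix_code L x = j")
  case True
  then obtain x where "prefix_code L x = j" by blast
  then show ?thesis by (simp add: prefix_code_fiber cdiam_cylinder)
qed auto

definition block_length :: "(nat \<Rightarrow> nat) \<Rightarrow> nat \<Rightarrow> nat" where
  "block_length c n = nat \<lfloor>log 2 (real (c n))\<rfloor>"

definition cantor_to_prod :: "(nat \<Rightarrow> nat) \<Rightarrow> cantor \<Rightarrow> nat \<Rightarrow> nat" where
  "cantor_to_prod c z n = prefix_code (block_length c n) z"

definition caught_set :: "(cantor \<Rightarrow> nat \<Rightarrow> nat) \<Rightarrow> (nat \<Rightarrow> nat set) \<Rightarrow> cantor set" where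
  "caught_set F \<phi> = {z. inf_in (F z) \<phi>}"

lemma two_power_block_length_le: "1 \<le> c n \<Longrightarrow> 2 ^ block_length c n \<le> c n"
proof -
  assume pos: "1 \<le> c n"
  have "real (2 ^ block_length c n) = 2 powr real (nat \<lfloor>log 2 (real (c n))\<rfloor>)"
    by (simp add: block_length_def powr_realpow)
  also have "\<dots> = 2 powr real_of_int \<lfloor>log 2 (real (c n))\<rfloor>" using pos by simp
  also have "\<dots> \<le> 2 powr log 2 (real (c n))" by (rule powr_mono) auto
  also have "\<dots> = real (c n)" using pos by simp
  finally show ?thesis by linarith
qed

lemma cantor_to_prod_in_prodc: "\<forall>n. 1 \<le> c n \<Longrightarrow> cantor_to_prod c z \<in> prodc c"
  unfolding prodc_def cantor_to_prod_def
  using prefix_code_less two_power_block_length_le less_le_trans by blast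

lemma gch_eq_block_length: "gch c h k = block_length c (interval_index h k)"
  by (simp add: gch_def block_length_def)

definition interval_start :: "(nat \<Rightarrow> nat) \<Rightarrow> nat \<Rightarrow> nat" where
  "interval_start h n = (\<Sum>i<n. h i)"

lemma interval_index_start_add:
  assumes "t < h n"
  shows "interval_index h (interval_start h n + t) = n"
  unfolding interval_index_def
proof (rule Least_equality)
  show "interval_start h n + t < (\<Sum>i\<le>n. h i)"
    using assms by (simp add: interval_start_def lessThan_Suc_atMost[symmetric])
next
  fix m assume "interval_start h n + t < (\<Sum>i\<le>m. h i)"
  moreover have "m < n \<Longrightarrow> (\<Sum>i\<le>m. h i) \<le> interval_start h n"
    unfolding interval_start_def by (rule sum_mono2) auto
  ultimately show "n \<le> m" by (meson le_add1 less_le_trans not_le)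
qed

text \<open>For \<open>k \<in> I\<^sub>n\<close>, the \<open>k\<close>-th cell is the cylinder coded by the \<open>(k - min I\<^sub>n)\<close>-th element
  of \<open>\<phi>(n)\<close>; as \<open>|\<phi>(n)| \<le> h(n) = |I\<^sub>n|\<close>, the cells indexed by \<open>I\<^sub>n\<close> exhaust \<open>\<phi>(n)\<close>.\<close>

definition slalom_cell :: "(nat \<Rightarrow> nat) \<Rightarrow> (nat \<Rightarrow> nat) \<Rightarrow> (nat \<Rightarrow> nat set) \<Rightarrow> nat \<Rightarrow> cantor set"
  where "slalom_cell c h \<phi> k =
    (let n = interval_index h k; t = k - interval_start h n
     in if t < card (\<phi> n)
        then {y. prefix_code (block_length c n) y = sorted_list_of_set (\<phi> n) ! t} else {})"

lemma cdiam_slalom_cell: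
  "slalom_cell c h \<phi> k = {} \<or> cdiam (slalom_cell c h \<phi> k) = (1/2)^(gch c h k)"
proof (cases "k - interval_start h (interval_index h k) < card (\<phi> (interval_index h k))")
  case True
  then have "slalom_cell c h \<phi> k = {y. prefix_code (block_length c (interval_index h k)) y =
      sorted_list_of_set (\<phi> (interval_index h k)) ! (k - interval_start h (interval_index h k))}"
    by (simp add: slalom_cell_def Let_def)
  then show ?thesis by (metis cdiam_prefix_code_fiber gch_eq_block_length)
qed (simp add: slalom_cell_def Let_def)

lemma caught_in_infinitely_many_cells:
  assumes \<phi>: "\<phi> \<in> slalom_space c h" and z: "z \<in> caught_set (cantor_to_prod c) \<phi>"
  shows "infinite {k. z \<in> slalom_cell c h \<phi> k}"
proof -
  have "{n. cantor_to_prod c z n \<in> \<phi> n} \<subseteq> interval_index h ` {k. z \<in> slalom_cell c h \<phi> k}"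
  proof
    fix n assume "n \<in> {n. cantor_to_prod c z n \<in> \<phi> n}"
    moreover have "finite (\<phi> n)" "card (\<phi> n) \<le> h n"
      using \<phi> by (auto simp: slalom_space_def intro: finite_subset)
    ultimately obtain t where t: "t < card (\<phi> n)" "t < h n"
      and code: "sorted_list_of_set (\<phi> n) ! t = cantor_to_prod c z n"
      by (metis in_set_conv_nth length_sorted_list_of_set mem_Collect_eq order_less_le_trans
          set_sorted_list_of_set)
    define k where "k = interval_start h n + t"
    have n: "interval_index h k = n" unfolding k_def by (rule interval_index_start_add[of t h n, OF t(2)])
    then have "z \<in> slalom_cell c h \<phi> k"
      using t code by (simp add: slalom_cell_def k_def cantor_to_prod_def)
    with n show "n \<in> interval_index h ` {k. z \<in> slalom_cell c h \<phi> k}" by blast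
  qed
  moreover have "infinite {n. cantor_to_prod c z n \<in> \<phi> n}"
    using z by (simp add: caught_set_def inf_in_def)
  ultimately show ?thesis using finite_surj by blast
qed

context
  fixes e c h :: "nat \<Rightarrow> nat"
  assumes growth: "\<forall>n\<ge>1. real (e (gch c h n)) \<ge> 2 * log 2 (real n)"
begin

lemma estar_weight_le_inverse_square:
  assumes "1 \<le> k"
  shows "(1/2::real)^(e (gch c h k)) \<le> inverse (real k ^ 2)"
proof -
  define E where "E = e (gch c h k)"
  have k: "0 < real k" using assms by simp
  have "real k ^ 2 = 2 powr (log 2 (real k)) * 2 powr (log 2 (real k))"
    using k by (simp add: power2_eq_square)
  also have "\<dots> = 2 powr (2 * log 2 (real k))" by (simp add: powr_add[symmetric])
  also have "\<dots> \<le> 2 powr real E" using growth assms by (intro powr_mono) (auto simp: E_def)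
  also have "\<dots> = 2 ^ E" by (simp add: powr_realpow)
  finally have "inverse ((2::real) ^ E) \<le> inverse (real k ^ 2)"
    using k by (intro le_imp_inverse_le) auto
  then show ?thesis by (simp add: E_def power_one_over inverse_eq_divide)
qed

lemma gch_tendsto_infinity:
  assumes "mono e"
  shows "filterlim (gch c h) at_top sequentially"
  unfolding filterlim_at_top
proof (intro allI eventually_sequentiallyI)
  fix M k :: nat assume k: "2 ^ e M + 2 \<le> k"
  show "M \<le> gch c h k"
  proof (rule ccontr)
    assume "\<not> M \<le> gch c h k"
    then have "e (gch c h k) \<le> e M" using \<open>mono e\<close> by (simp add: monoD)
    moreover have "real (e (gch c h k)) \<ge> 2 * log 2 (real k)" using growth k by simp
    moreover have "(2::real) powr real (e M) < real k" using k by (simp add: powr_realpow)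
    then have "real (e M) < log 2 (real k)" using k by (simp add: less_log_iff)
    ultimately show False using k by simp
  qed
qed

lemma caught_subset_hnull:
  assumes e: "mono e" and \<phi>: "\<phi> \<in> slalom_space c h"
    and A: "A \<subseteq> caught_set (cantor_to_prod c) \<phi>"
  shows "A \<in> hnull (estar e)"
proof (rule hnull_if_infinitely_often_covered)
  let ?C = "slalom_cell c h \<phi>"
  show "\<forall>z\<in>A. infinite {k. z \<in> ?C k}" using A caught_in_infinitely_many_cells[OF \<phi>] by blast
  have weight: "estar e (cdiam (?C k)) = (if ?C k = {} then 0 else (1/2)^(e (gch c h k)))" for k
  proof (cases "?C k = {}")
    case False
    then show ?thesis using cdiam_slalom_cell[of c h \<phi> k] by (simp add: estar_half_power)
  qed (simp add: cdiam_def estar_def)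
  show "\<forall>k. 0 \<le> estar e (cdiam (?C k))" by (simp add: weight)
  show "summable (\<lambda>k. estar e (cdiam (?C k)))"
  proof (rule summable_comparison_test')
    show "summable (\<lambda>k. inverse (real k ^ 2))" using inverse_power_summable[of 2] by simp
    show "norm (estar e (cdiam (?C k))) \<le> inverse (real k ^ 2)" if "1 \<le> k" for k
      using estar_weight_le_inverse_square[OF that] by (simp add: weight)
  qed
  have diam: "0 \<le> cdiam (?C k) \<and> cdiam (?C k) \<le> (1/2)^(gch c h k)" for k
  proof (cases "?C k = {}")
    case False
    then show ?thesis using cdiam_slalom_cell[of c h \<phi> k] by simp
  qed (simp add: cdiam_def)
  show "(\<lambda>k. cdiam (?C k)) \<longlonglongrightarrow> 0"
  proof (rule tendsto_sandwich)
    show "\<forall>\<^sub>F k in sequentially. 0 \<le> cdiam (?C k)"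
      and "\<forall>\<^sub>F k in sequentially. cdiam (?C k) \<le> (1/2)^(gch c h k)"
      using diam by simp_all
    show "(\<lambda>k. (1/2::real)^(gch c h k)) \<longlonglongrightarrow> 0"
      using filterlim_compose[OF LIMSEQ_realpow_zero gch_tendsto_infinity[OF e]] by simp
  qed simp
qed

end

lemma card_leq_image: "card_leq (f ` A) A"
  unfolding card_leq_def by (auto intro!: exI[of _ "inv_into A f"] inj_on_inv_into inv_into_into)

context
  fixes c h :: "nat \<Rightarrow> nat" and F :: "cantor \<Rightarrow> nat \<Rightarrow> nat" and I :: "cantor set set"
  assumes F_into: "\<forall>z. F z \<in> prodc c"
    and caught_small: "\<forall>\<phi>\<in>slalom_space c h. \<forall>A \<subseteq> caught_set F \<phi>. A \<in> I"
begin

lemma v_exists_family_image: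
  assumes "non_set I X"
  shows "v_exists_family c h (F ` X)"
  unfolding v_exists_family_def
proof (intro conjI ballI)
  show "F ` X \<subseteq> prodc c" using F_into by blast
  fix \<phi> assume "\<phi> \<in> slalom_space c h"
  then have "\<not> X \<subseteq> caught_set F \<phi>" using assms caught_small by (auto simp: non_set_def)
  then obtain z where "z \<in> X" "\<not> inf_in (F z) \<phi>" by (auto simp: caught_set_def)
  then show "\<exists>x\<in>F ` X. \<not> inf_in x \<phi>" by blast
qed

lemma cov_family_image:
  assumes \<Phi>: "c_exists_family c h \<Phi>"
  shows "cov_family I (caught_set F ` \<Phi>)"
  unfolding cov_family_def
proof
  show "caught_set F ` \<Phi> \<subseteq> I"
  proof
    fix A assume "A \<in> caught_set F ` \<Phi>"
    then obtain \<phi> where "\<phi> \<in> slalom_space c h" "A = caught_set F \<phi>"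
      using \<Phi> by (auto simp: c_exists_family_def)
    then show "A \<in> I" using caught_small by blast
  qed
  have "z \<in> \<Union> (caught_set F ` \<Phi>)" for z
  proof -
    obtain \<phi> where "\<phi> \<in> \<Phi>" "inf_in (F z) \<phi>"
      using \<Phi> F_into unfolding c_exists_family_def by blast
    then show ?thesis by (auto simp: caught_set_def)
  qed
  then show "\<Union> (caught_set F ` \<Phi>) = UNIV" by blast
qed

end

theorem lemma3p4:
  fixes e c h :: "nat \<Rightarrow> nat"
  assumes e_mono: "mono e"
    and e_unbounded: "\<forall>m. \<exists>k. m \<le> e k"
    and c_pos: "\<forall>n. 1 \<le> c n"
    and partition: "\<forall>k. \<exists>n. k < (\<Sum>i\<le>n. h i)"
    and growth: "\<forall>n\<ge>1. real (e (gch c h n)) \<ge> 2 * log 2 (real n)"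
  shows "(\<forall>X. non_set (hnull (estar e)) X \<longrightarrow>
            (\<exists>F. v_exists_family c h F \<and> card_leq F X))
       \<and> (\<forall>\<Phi>. c_exists_family c h \<Phi> \<longrightarrow>
            (\<exists>\<A>. cov_family (hnull (estar e)) \<A> \<and> card_leq \<A> \<Phi>))"
proof -
  let ?F = "cantor_to_prod c"
  have into: "\<forall>z. ?F z \<in> prodc c" using cantor_to_prod_in_prodc[OF c_pos] by blast
  have small: "\<forall>\<phi>\<in>slalom_space c h. \<forall>A \<subseteq> caught_set ?F \<phi>. A \<in> hnull (estar e)"
    by (intro ballI allI impI caught_subset_hnull[OF growth e_mono])
  show ?thesis
  proof (intro conjI allI impI)
    fix X assume "non_set (hnull (estar e)) X"
    then show "\<exists>F. v_exists_family c h F \<and> card_leq F X"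
      by (intro exI[of _ "?F ` X"] conjI v_exists_family_image[OF into small] card_leq_image)
  next
    fix \<Phi> assume "c_exists_family c h \<Phi>"
    then show "\<exists>\<A>. cov_family (hnull (estar e)) \<A> \<and> card_leq \<A> \<Phi>"
      by (intro exI[of _ "caught_set ?F ` \<Phi>"] conjI cov_family_image[OF into small] card_leq_image)
  qed
qed

end
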